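(* Let $\Gamma=(\mathcal{V},\mathcal{H})$ be an oriented hypergraph with normalized Laplacian $L$. If $\Gamma$ has $\hat{n}$ vertices that are pairwise twins, then $0$ is an eigenvalue of $L$ with multiplicity at least $\hat{n}-1$. Furthermore, if $v_i$ and $v_j$ are twin vertices and $f:\mathcal{V}\to\mathbb{R}$ is an eigenfunction of $L$ with eigenvalue $\lambda\neq 0$, then $f(v_i)=f(v_j)$.
   Context: An oriented hypergraph is a pair $\Gamma=(\mathcal{V},\mathcal{H})$ where $\mathcal{V}=\{v_1,\ldots,v_N\}$ is a finite set and each hyperedge $h$ is a pair $(h_{in},h_{out})$ of disjoint nonempty subsets of $\mathcal{V}$; standing assumption: no isolated vertices. Vertices are co-oriented in $h$ if they lie in the same one of $h_{in},h_{out}$, anti-oriented if in different ones. $\deg(v)$ is the number of hyperedges containing $v$, $D$ the diagonal degree matrix; the adjacency matrix has $A_{ii}=0$ and $A_{ij}=\#\{h: v_i,v_j\text{ anti-oriented in }h\}-\#\{h:v_i,v_j\text{ co-oriented in }h\}$ for $i\ne j$; $L=\mathrm{Id}-D^{-1}A$, acting on functions $f:\mathcal{V}\to\mathbb{R}$ by $Lf(v_i)=f(v_i)-\frac{1}{\deg v_i}\sum_{j} A_{ij}f(v_j)$. Two vertices are twins if they belong to exactly the same hyperedges and, in each such hyperedge, are co-oriented (so $A_{ij}=-\deg v_i=-\deg v_j$ and $A_{ik}=A_{jk}$ for $k\ne i,j$). *)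

theory Defs
  imports "Jordan_Normal_Form.Char_Poly"
begin

text \<open>Vertices are v_1..v_N, represented as 0..<N. A hyperedge is a pair (h_in, h_out).\<close>

type_synonym hyperedge = "nat set \<times> nat set"

definition vert_in :: "nat \<Rightarrow> hyperedge \<Rightarrow> bool" where
  "vert_in v h = (v \<in> fst h \<or> v \<in> snd h)"

definition oriented_hypergraph :: "nat \<Rightarrow> hyperedge set \<Rightarrow> bool" where
  "oriented_hypergraph N H =
     (finite H \<and>
      (\<forall>h\<in>H. fst h \<noteq> {} \<and> snd h \<noteq> {} \<and> fst h \<inter> snd h = {} \<and>
              fst h \<subseteq> {0..<N} \<and> snd h \<subseteq> {0..<N}) \<and>
      (\<forall>v<N. \<exists>h\<in>H. vert_in v h))"

definition co_oriented :: "nat \<Rightarrow> nat \<Rightarrow> hyperedge \<Rightarrow> bool" where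
  "co_oriented i j h = ((i \<in> fst h \<and> j \<in> fst h) \<or> (i \<in> snd h \<and> j \<in> snd h))"

definition anti_oriented :: "nat \<Rightarrow> nat \<Rightarrow> hyperedge \<Rightarrow> bool" where
  "anti_oriented i j h = ((i \<in> fst h \<and> j \<in> snd h) \<or> (i \<in> snd h \<and> j \<in> fst h))"

definition hdeg :: "hyperedge set \<Rightarrow> nat \<Rightarrow> nat" where
  "hdeg H v = card {h\<in>H. vert_in v h}"

definition hadj :: "hyperedge set \<Rightarrow> nat \<Rightarrow> nat \<Rightarrow> real" where
  "hadj H i j = (if i = j then 0 else
      real (card {h\<in>H. anti_oriented i j h}) - real (card {h\<in>H. co_oriented i j h}))"

definition hlaplacian :: "nat \<Rightarrow> hyperedge set \<Rightarrow> real mat" where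
  "hlaplacian N H = mat N N (\<lambda>(i,j). (if i = j then 1 else 0) - hadj H i j / real (hdeg H i))"

definition twins :: "hyperedge set \<Rightarrow> nat \<Rightarrow> nat \<Rightarrow> bool" where
  "twins H i j = (i \<noteq> j \<and> (\<forall>h\<in>H. vert_in i h \<longleftrightarrow> vert_in j h) \<and>
                  (\<forall>h\<in>H. vert_in i h \<longrightarrow> co_oriented i j h))"

end

theory Submission imports Defs begin

text \<open>Twin vertices give identical rows of the normalized Laplacian: away from the pair
  the adjacencies and degrees agree, and on the pair both entries are 1, because twins are
  co-oriented in all their hyperedges, so their mutual adjacency is minus the degree.
  If rows t and s of A agree, subtracting row s from row t of X I - A leaves X (e_t - e_s);
  hence a set S of identical rows makes X^(|S| - 1) divide the characteristic polynomial.
  Identical rows i, j also give lam f_i = lam f_j for an eigenvector f.\<close>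

lemma twins_sym: "twins H i j \<Longrightarrow> twins H j i"
  unfolding twins_def co_oriented_def by auto

lemma twins_same_side:
  assumes "oriented_hypergraph N H" and "twins H i j" and "h \<in> H"
  shows "i \<in> fst h \<longleftrightarrow> j \<in> fst h" and "i \<in> snd h \<longleftrightarrow> j \<in> snd h"
proof -
  have "fst h \<inter> snd h = {}" using assms(1,3) unfolding oriented_hypergraph_def by auto
  with assms(2,3) show "i \<in> fst h \<longleftrightarrow> j \<in> fst h" and "i \<in> snd h \<longleftrightarrow> j \<in> snd h"
    unfolding twins_def vert_in_def co_oriented_def by blast+
qed

lemma hdeg_twins:
  assumes "twins H i j"
  shows "hdeg H i = hdeg H j"
proof -
  have "{h\<in>H. vert_in i h} = {h\<in>H. vert_in j h}" using assms unfolding twins_def by blast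
  then show ?thesis unfolding hdeg_def by simp
qed

lemma hadj_twins_left:
  assumes "oriented_hypergraph N H" and "twins H i j" and "k \<noteq> i" and "k \<noteq> j"
  shows "hadj H i k = hadj H j k"
proof -
  note side = twins_same_side[OF assms(1,2)]
  have "{h\<in>H. anti_oriented i k h} = {h\<in>H. anti_oriented j k h}"
    and "{h\<in>H. co_oriented i k h} = {h\<in>H. co_oriented j k h}"
    using side unfolding anti_oriented_def co_oriented_def by blast+
  then show ?thesis using assms(3,4) unfolding hadj_def by simp
qed

lemma hadj_twins:
  assumes "oriented_hypergraph N H" and "twins H i j"
  shows "hadj H i j = - real (hdeg H i)"
proof -
  have "fst h \<inter> snd h = {}" if "h \<in> H" for h
    using assms(1) that unfolding oriented_hypergraph_def by auto
  then have anti: "{h\<in>H. anti_oriented i j h} = {}"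
    using twins_same_side[OF assms] unfolding anti_oriented_def by blast
  have co: "{h\<in>H. co_oriented i j h} = {h\<in>H. vert_in i h}"
    using assms(2) unfolding twins_def co_oriented_def vert_in_def by blast
  have "i \<noteq> j" using assms(2) unfolding twins_def by simp
  then show ?thesis unfolding hadj_def hdeg_def anti co by simp
qed

lemma hadj_self [simp]: "hadj H k k = 0"
  unfolding hadj_def by simp

lemma hdeg_pos:
  assumes "oriented_hypergraph N H" and "i < N"
  shows "hdeg H i > 0"
proof -
  have "finite H" and "\<exists>h\<in>H. vert_in i h"
    using assms unfolding oriented_hypergraph_def by auto
  then show ?thesis unfolding hdeg_def by (auto simp: card_gt_0_iff)
qed

lemma hlaplacian_carrier: "hlaplacian N H \<in> carrier_mat N N"
  unfolding hlaplacian_def by simp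

lemma row_hlaplacian_index:
  "i < N \<Longrightarrow> k < N \<Longrightarrow>
    row (hlaplacian N H) i $ k = (if i = k then 1 else 0) - hadj H i k / real (hdeg H i)"
  unfolding hlaplacian_def by simp

lemma row_hlaplacian_twins:
  assumes G: "oriented_hypergraph N H" and tw: "twins H i j" and "i < N" and "j < N"
  shows "row (hlaplacian N H) i = row (hlaplacian N H) j"
proof (rule eq_vecI)
  have "i \<noteq> j" using tw unfolding twins_def by simp
  have deg: "hdeg H j = hdeg H i" using hdeg_twins[OF tw] by simp
  have "real (hdeg H i) \<noteq> 0" using hdeg_pos[OF G \<open>i < N\<close>] by simp
  fix k assume "k < dim_vec (row (hlaplacian N H) j)"
  then have "k < N" by (simp add: hlaplacian_def)
  consider "k = i" | "k = j" | "k \<noteq> i" "k \<noteq> j" by blast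
  then show "row (hlaplacian N H) i $ k = row (hlaplacian N H) j $ k"
  proof cases
    case 1
    then show ?thesis
      using \<open>i \<noteq> j\<close> \<open>real (hdeg H i) \<noteq> 0\<close> hadj_twins[OF G twins_sym[OF tw]] deg
      by (simp add: row_hlaplacian_index \<open>i < N\<close> \<open>j < N\<close>)
  next
    case 2
    then show ?thesis
      using \<open>i \<noteq> j\<close> \<open>real (hdeg H i) \<noteq> 0\<close> hadj_twins[OF G tw]
      by (simp add: row_hlaplacian_index \<open>i < N\<close> \<open>j < N\<close>)
  next
    case 3
    then show ?thesis
      using hadj_twins_left[OF G tw] deg
      by (simp add: row_hlaplacian_index \<open>i < N\<close> \<open>j < N\<close> \<open>k < N\<close>)
  qed
qed (simp add: hlaplacian_def)

lemma eigenvector_entries_eq_if_rows_eq: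
  fixes A :: "'a::field mat"
  assumes A: "A \<in> carrier_mat n n" and "i < n" and "j < n" and rows: "row A i = row A j"
    and ev: "eigenvector A f lam" and "lam \<noteq> 0"
  shows "f $ i = f $ j"
proof -
  have f: "f \<in> carrier_vec n" and Af: "A *\<^sub>v f = lam \<cdot>\<^sub>v f"
    using ev A unfolding eigenvector_def by auto
  have "lam * f $ i = (A *\<^sub>v f) $ i" using Af f \<open>i < n\<close> by simp
  also have "\<dots> = row A j \<bullet> f" using A \<open>i < n\<close> rows by simp
  also have "\<dots> = (A *\<^sub>v f) $ j" using A \<open>j < n\<close> by simp
  also have "\<dots> = lam * f $ j" using Af f \<open>j < n\<close> by simp
  finally show ?thesis using \<open>lam \<noteq> 0\<close> by simp
qed

text \<open>B U is C with each row t in U replaced by e_t - e_s; each replacement takes out one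
  factor c, since subtracting row s from row t of C leaves c (e_t - e_s).\<close>

lemma pow_dvd_det_if_rows_shifted:
  fixes C :: "'a::comm_ring_1 mat"
  assumes C: "C \<in> carrier_mat n n" and s: "s < n" and T: "T \<subseteq> {0..<n} - {s}"
    and rows: "\<And>t l. t \<in> T \<Longrightarrow> l < n \<Longrightarrow>
       C $$ (t, l) = C $$ (s, l) + c * (if l = t then 1 else if l = s then -1 else 0)"
  shows "c ^ card T dvd det C"
proof -
  define B where "B U = mat n n (\<lambda>(k, l). if k \<in> U
      then (if l = k then 1 else if l = s then -1 else 0) else C $$ (k, l))" for U
  have B: "B U \<in> carrier_mat n n" for U unfolding B_def by simp
  have "det C = c ^ card U * det (B U)" if "finite U" "U \<subseteq> T" for U
    using that
  proof (induction U rule: finite_induct)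
    case empty
    have "B {} = C" unfolding B_def using C by (intro eq_matI) auto
    then show ?case by simp
  next
    case (insert t U)
    have t: "t \<in> T" "t < n" "t \<noteq> s" and "s \<notin> U" using insert.prems T by auto
    have "addrow (-1) t s (B U) = multrow t c (B (insert t U))"
      using t \<open>s \<notin> U\<close> \<open>t \<notin> U\<close> rows[OF t(1)] s
      by (intro eq_matI) (auto simp: B_def)
    then have "det (B U) = c * det (B (insert t U))"
      using det_addrow[OF s t(3) B] det_multrow[OF t(2) B] by metis
    then show ?case using insert by simp
  qed
  moreover have "finite T" using T finite_subset by blast
  ultimately show ?thesis by simp
qed

lemma char_poly_nonzero:
  assumes "A \<in> carrier_mat n n"
  shows "char_poly A \<noteq> 0"
  using degree_monic_char_poly[OF assms] by auto

lemma order_char_poly_ge_if_rows_eq: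
  fixes A :: "'a::field mat"
  assumes A: "A \<in> carrier_mat n n" and S: "S \<subseteq> {0..<n}"
    and rows: "\<forall>i\<in>S. \<forall>j\<in>S. row A i = row A j"
  shows "card S - 1 \<le> order 0 (char_poly A)"
proof (cases "S = {}")
  case False
  then obtain s where "s \<in> S" by blast
  then have "s < n" using S by auto
  have entry: "char_poly_matrix A $$ (k, l) = (if k = l then [:0, 1:] else 0) + [:- A $$ (k, l):]"
    if "k < n" "l < n" for k l
    unfolding char_poly_matrix_def using that A by auto
  have "[:0, 1:] ^ card (S - {s}) dvd char_poly A"
    unfolding char_poly_def
  proof (rule pow_dvd_det_if_rows_shifted[OF char_poly_matrix_closed[OF A] \<open>s < n\<close>])
    show "S - {s} \<subseteq> {0..<n} - {s}" using S by auto
    fix t l assume t: "t \<in> S - {s}" and "l < n"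
    then have "t < n" using S by auto
    have "A $$ (t, l) = row A t $ l" "A $$ (s, l) = row A s $ l"
      using A \<open>t < n\<close> \<open>s < n\<close> \<open>l < n\<close> by auto
    moreover have "row A t = row A s" using rows t \<open>s \<in> S\<close> by blast
    ultimately have "A $$ (t, l) = A $$ (s, l)" by simp
    then show "char_poly_matrix A $$ (t, l) = char_poly_matrix A $$ (s, l) +
        [:0, 1:] * (if l = t then 1 else if l = s then -1 else 0)"
      using t \<open>l < n\<close> \<open>t < n\<close> \<open>s < n\<close> by (auto simp: entry)
  qed
  then have "[:- 0, 1:] ^ card (S - {s}) dvd char_poly A" by simp
  then have "card (S - {s}) \<le> order 0 (char_poly A)"
    using order_divides char_poly_nonzero[OF A] by blast
  then show ?thesis using \<open>s \<in> S\<close> S by (simp add: finite_subset)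
qed simp

lemma eigenvalue_if_order_char_poly_pos:
  fixes A :: "'a::field mat"
  assumes A: "A \<in> carrier_mat n n" and "order a (char_poly A) > 0"
  shows "eigenvalue A a"
  using assms(2) order_gt_0_iff[OF char_poly_nonzero[OF A]] eigenvalue_root_char_poly[OF A]
  by simp

theorem mainTheorem4:
  fixes N :: nat and H :: "hyperedge set"
  assumes "oriented_hypergraph N H"
  shows "(\<forall>S. S \<subseteq> {0..<N} \<longrightarrow> card S \<ge> 2 \<longrightarrow>
            (\<forall>i\<in>S. \<forall>j\<in>S. i \<noteq> j \<longrightarrow> twins H i j) \<longrightarrow>
            eigenvalue (hlaplacian N H) 0 \<and>
            card S - 1 \<le> order 0 (char_poly (hlaplacian N H)))
       \<and> (\<forall>i j f lam. i < N \<longrightarrow> j < N \<longrightarrow> twins H i j \<longrightarrow>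
            eigenvector (hlaplacian N H) f lam \<longrightarrow> lam \<noteq> 0 \<longrightarrow> f $ i = f $ j)"
proof (intro conjI allI impI)
  fix S
  assume S: "S \<subseteq> {0..<N}" and "card S \<ge> 2"
    and tw: "\<forall>i\<in>S. \<forall>j\<in>S. i \<noteq> j \<longrightarrow> twins H i j"
  have "row (hlaplacian N H) i = row (hlaplacian N H) j" if "i \<in> S" "j \<in> S" for i j
  proof (cases "i = j")
    case False
    show ?thesis
      by (rule row_hlaplacian_twins[OF assms]) (use False tw S that in auto)
  qed simp
  then show order: "card S - 1 \<le> order 0 (char_poly (hlaplacian N H))"
    by (intro order_char_poly_ge_if_rows_eq[OF hlaplacian_carrier S]) blast
  show "eigenvalue (hlaplacian N H) 0"
    by (rule eigenvalue_if_order_char_poly_pos[OF hlaplacian_carrier])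
      (use order \<open>card S \<ge> 2\<close> in linarith)
next
  fix i j f lam
  assume "i < N" "j < N" "twins H i j" "eigenvector (hlaplacian N H) f lam" "lam \<noteq> 0"
  moreover have "row (hlaplacian N H) i = row (hlaplacian N H) j"
    using row_hlaplacian_twins[OF assms] calculation by blast
  ultimately show "f $ i = f $ j"
    using eigenvector_entries_eq_if_rows_eq[OF hlaplacian_carrier] by blast
qed

end
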